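(* Let $c>1$. If a number $x_1\in(0,1)$ satisfies $x_1\operatorname{arctanh} x_1<\frac{1+c}{2c}$, then $\Phi(c)<H(x_1,c)$.
   Context: $\operatorname{arctanh} r=\frac12\log\frac{1+r}{1-r}$. For $c\ge0$, $\Phi(c)=\sup_{0<r<1}\{r+c(1-r^2)\operatorname{arctanh} r\}$. For $x>0$ and $c$ real, $H(x,c)=\frac{1-c}{2}x+\frac{1+c}{2}x^{-1}$. *)

theory Defs
  imports Complex_Main
begin

definition arctanh :: "real \<Rightarrow> real" where
  "arctanh r = (1/2) * ln ((1 + r) / (1 - r))"

definition Phi :: "real \<Rightarrow> real" where
  "Phi c = (SUP r\<in>{0<..<1}. r + c * (1 - r^2) * arctanh r)"

definition H :: "real \<Rightarrow> real \<Rightarrow> real" where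
  "H x c = (1 - c) / 2 * x + (1 + c) / 2 * inverse x"

end

theory Submission
  imports Defs
begin

(* The objective r + c (1 - r^2) artanh r has derivative 1 + c - 2 c r artanh r, and r artanh r
   increases strictly from 0 to infinity on (0, 1).  So the supremum Phi c is attained at the unique s
   with s artanh s = (1 + c) / (2 c); substituting artanh s there gives the value H s c.  The
   hypothesis on x1 says exactly that x1 < s, and H (-) c is strictly decreasing for c > 1. *)

lemma arctanh_eq_artanh: "arctanh = artanh"
  by (simp add: fun_eq_iff arctanh_def artanh_def)

lemma artanh_real_less:
  fixes s t :: real
  assumes "-1 < s" "s < t" "t < 1"
  shows "artanh s < artanh t"
proof (rule DERIV_pos_imp_increasing[OF \<open>s < t\<close>])
  fix x :: real assume "s \<le> x" "x \<le> t"
  with assms have "\<bar>x\<bar> < 1"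
    by auto
  then have "x^2 < 1"
    by (simp add: abs_square_less_1)
  with \<open>\<bar>x\<bar> < 1\<close> show "\<exists>y. (artanh has_real_derivative y) (at x) \<and> 0 < y"
    by (intro exI[of _ "1 / (1 - x^2)"] conjI artanh_real_has_field_derivative) auto
qed

lemma artanh_real_pos: "0 < r \<Longrightarrow> r < 1 \<Longrightarrow> 0 < artanh (r::real)"
  using artanh_real_less[of 0 r] by simp

lemma mult_artanh_strict_mono:
  fixes s t :: real
  assumes "0 \<le> s" "s < t" "t < 1"
  shows "s * artanh s < t * artanh t"
proof -
  have "s * artanh s \<le> s * artanh t"
    using assms by (intro mult_left_mono less_imp_le[OF artanh_real_less]) auto
  also have "\<dots> < t * artanh t"
    using assms artanh_real_pos[of t] by (intro mult_strict_right_mono) auto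
  finally show ?thesis .
qed

lemma filterlim_mult_artanh_at_left_1:
  "filterlim (\<lambda>r::real. r * artanh r) at_top (at_left 1)"
  by (rule filterlim_tendsto_pos_mult_at_top[OF _ _ artanh_real_at_left_1]) auto

lemma mult_artanh_eq_exists:
  fixes a k :: real
  assumes "0 \<le> a" "a < 1" "a * artanh a < k"
  obtains r where "a < r" "r < 1" "r * artanh r = k"
proof -
  have "\<forall>\<^sub>F r in at_left 1. k \<le> r * artanh r \<and> r \<in> {a<..<1}"
    using filterlim_mult_artanh_at_left_1 eventually_at_left_real[OF \<open>a < 1\<close>]
    by (intro eventually_conj) (auto simp: filterlim_at_top)
  then obtain b where b: "a < b" "b < 1" "k \<le> b * artanh b"
    using eventually_happens'[OF trivial_limit_at_left_real] by auto
  have "continuous_on {a..b} (\<lambda>r. r * artanh r)"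
    using assms b by (intro continuous_intros) auto
  then obtain r where r: "a \<le> r" "r \<le> b" "r * artanh r = k"
    using IVT'[of "\<lambda>r. r * artanh r" a k b] assms b by auto
  with assms have "a \<noteq> r" by auto
  with r b show thesis
    using that[of r] by linarith
qed

definition Phi_objective :: "real \<Rightarrow> real \<Rightarrow> real" where
  "Phi_objective c r = r + c * (1 - r^2) * artanh r"

lemma Phi_eq_SUP_Phi_objective: "Phi c = (SUP r\<in>{0<..<1}. Phi_objective c r)"
  by (simp add: Phi_def Phi_objective_def arctanh_eq_artanh)

lemma Phi_objective_has_real_derivative:
  assumes "\<bar>r\<bar> < 1"
  shows "(Phi_objective c has_real_derivative 1 + c - 2 * c * (r * artanh r)) (at r)"
proof -
  have "r^2 < 1"
    using assms by (simp add: abs_square_less_1)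
  have "(Phi_objective c has_real_derivative
          1 + (c * (0 - 2 * r) * artanh r + 1 / (1 - r^2) * (c * (1 - r^2)))) (at r)"
    unfolding Phi_objective_def[abs_def] using assms
    by (intro derivative_eq_intros refl) auto
  also have "1 + (c * (0 - 2 * r) * artanh r + 1 / (1 - r^2) * (c * (1 - r^2)))
      = 1 + c - 2 * c * (r * artanh r)"
    using \<open>r^2 < 1\<close> by (simp add: field_simps)
  finally show ?thesis .
qed

(* As r * artanh r increases strictly on [0, 1), the derivative changes sign only at s. *)
lemma Phi_objective_le_at_critical:
  assumes "c > 0" "0 \<le> r" "r < 1" "0 \<le> s" "s < 1"
    and "s * artanh s = (1 + c) / (2 * c)"
  shows "Phi_objective c r \<le> Phi_objective c s"
proof (cases "r \<le> s")
  case True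
  show ?thesis
  proof (rule DERIV_nonneg_imp_nondecreasing[OF True])
    fix x assume "r \<le> x" "x \<le> s"
    with assms have "x * artanh x \<le> (1 + c) / (2 * c)"
      using mult_artanh_strict_mono[of x s] by (cases "x = s") auto
    with \<open>c > 0\<close> have "1 + c - 2 * c * (x * artanh x) \<ge> 0"
      by (simp add: field_simps)
    with \<open>r \<le> x\<close> \<open>x \<le> s\<close> assms show "\<exists>y. (Phi_objective c has_real_derivative y) (at x) \<and> y \<ge> 0"
      by (intro exI[of _ "1 + c - 2 * c * (x * artanh x)"] conjI Phi_objective_has_real_derivative) auto
  qed
next
  case False
  show ?thesis
  proof (rule DERIV_nonpos_imp_nonincreasing[of s r])
    show "s \<le> r"
      using False by simp
  next
    fix x assume "s \<le> x" "x \<le> r"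
    with assms have "(1 + c) / (2 * c) \<le> x * artanh x"
      using mult_artanh_strict_mono[of s x] by (cases "x = s") auto
    with \<open>c > 0\<close> have "1 + c - 2 * c * (x * artanh x) \<le> 0"
      by (simp add: field_simps)
    with \<open>s \<le> x\<close> \<open>x \<le> r\<close> assms show "\<exists>y. (Phi_objective c has_real_derivative y) (at x) \<and> y \<le> 0"
      by (intro exI[of _ "1 + c - 2 * c * (x * artanh x)"] conjI Phi_objective_has_real_derivative) auto
  qed
qed

lemma Phi_objective_at_critical:
  assumes "c \<noteq> 0" "0 < s" "s * artanh s = (1 + c) / (2 * c)"
  shows "Phi_objective c s = H s c"
proof -
  have artanh_s: "artanh s = (1 + c) / (2 * c * s)"
    using assms by (simp add: field_simps)
  show ?thesis
    unfolding Phi_objective_def H_def artanh_s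
    using assms by (simp add: field_simps power2_eq_square)
qed

lemma H_strict_antimono:
  assumes "c \<ge> 1" "0 < x" "x < y"
  shows "H y c < H x c"
proof -
  have "(1 - c) / 2 * y \<le> (1 - c) / 2 * x"
    using assms by (intro mult_left_mono_neg) auto
  moreover have "(1 + c) / 2 * inverse y < (1 + c) / 2 * inverse x"
    using assms by (intro mult_strict_left_mono) (auto simp: field_simps)
  ultimately show ?thesis
    by (simp add: H_def)
qed

theorem lemma2p5:
  fixes c x1 :: real
  assumes "c > 1" and "0 < x1" and "x1 < 1"
    and "x1 * arctanh x1 < (1 + c) / (2 * c)"
  shows "Phi c < H x1 c"
proof -
  obtain s where s: "x1 < s" "s < 1" "s * artanh s = (1 + c) / (2 * c)"
    using mult_artanh_eq_exists[of x1] assms by (auto simp: arctanh_eq_artanh)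
  have "Phi c \<le> Phi_objective c s"
    unfolding Phi_eq_SUP_Phi_objective
    using assms s by (intro cSUP_least Phi_objective_le_at_critical) auto
  also have "\<dots> = H s c"
    using assms s by (intro Phi_objective_at_critical) auto
  also have "\<dots> < H x1 c"
    using assms s by (intro H_strict_antimono) auto
  finally show ?thesis .
qed

end
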